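(* Let $F$ be a distribution on the nonnegative integers $\mathbf Z^+$ with unbounded support. Then $F\in\mathcal S_{\text{lattice}}(\hat\gamma)$ if and only if: (i) $\liminf_{x\to\infty}F\{x-1\}/F\{x\}\ge e^{\hat\gamma}$ (over integers $x$); and (ii) $F*F\{n\}\sim c\,F\{n\}$ as $n\to\infty$ for some $c\in(0,\infty)$.
   Context: $F\{n\}$ denotes the mass of $F$ at the point $n$. $\varphi(\gamma)=\sum_{n\ge0}e^{\gamma n}F\{n\}\in(0,\infty]$ and $\hat\gamma=\sup\{\gamma:\varphi(\gamma)<\infty\}$. For $\gamma\ge0$, a distribution $F$ on $\mathbf Z^+$ with unbounded support belongs to $\mathcal S_{\text{lattice}}(\gamma)$ if (i) $\varphi(\gamma)<\infty$; (ii) $F\{n+1\}/F\{n\}\to e^{-\gamma}$ as $n\to\infty$; (iii) $F*F\{n\}\sim 2\varphi(\gamma)F\{n\}$ as $n\to\infty$. *)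

theory Defs
  imports "HOL-Probability.Probability_Mass_Function" "HOL-Library.Landau_Symbols"
begin

text \<open>A distribution F on the nonnegative integers is a nat pmf; F{n} = pmf F n.\<close>

definition phi_finite :: "nat pmf \<Rightarrow> real \<Rightarrow> bool" where
  "phi_finite F \<gamma> \<longleftrightarrow> summable (\<lambda>n. exp (\<gamma> * real n) * pmf F n)"

definition phi :: "nat pmf \<Rightarrow> real \<Rightarrow> real" where
  "phi F \<gamma> = (\<Sum>n. exp (\<gamma> * real n) * pmf F n)"

definition gamma_hat :: "nat pmf \<Rightarrow> ereal" where
  "gamma_hat F = Sup {ereal \<gamma> | \<gamma>. phi_finite F \<gamma>}"

definition conv2 :: "nat pmf \<Rightarrow> nat \<Rightarrow> real" where
  "conv2 F n = (\<Sum>k\<le>n. pmf F k * pmf F (n - k))"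

definition S_lattice :: "nat pmf \<Rightarrow> real \<Rightarrow> bool" where
  "S_lattice F \<gamma> \<longleftrightarrow> \<gamma> \<ge> 0 \<and> infinite (set_pmf F) \<and> phi_finite F \<gamma> \<and>
     ((\<lambda>n. pmf F (Suc n) / pmf F n) \<longlonglongrightarrow> exp (- \<gamma>)) \<and>
     (conv2 F \<sim>[sequentially] (\<lambda>n. 2 * phi F \<gamma> * pmf F n))"

end

theory Submission
  imports Defs
begin

(*
  Tilt the masses by the critical exponent, b n = exp (gamma n) F{n}.  Condition (i) says that
  b (n - 1) / b n is eventually at least 1 - eps, and condition (ii) that (b * b) n / b n tends
  to c.  Bounding (b * b) n from below by the terms b k b (n - k), k <= K, and their mirror
  images, and chaining the ratio condition, gives b 0 + L (b 1 + ... + b K) <= c / 2 whenever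
  b (n - 1) >= L b n for infinitely many n.  With L = 1 this shows sum b <= c / 2, i.e.
  phi (gamma) < infinity.  Since no exponential moment beyond gamma_hat is finite, a discrete
  form of the Foss-Korshunov lower bound gives c >= 2 sum b, so c = 2 phi (gamma); then L > 1
  is impossible, whence b (n - 1) / b n -> 1.  If gamma_hat = infinity the same bound with
  arbitrarily large L contradicts (i).
*)

definition conv2_seq :: "(nat \<Rightarrow> real) \<Rightarrow> nat \<Rightarrow> real" where
  "conv2_seq a n = (\<Sum>k\<le>n. a k * a (n - k))"

definition exp_tilt :: "real \<Rightarrow> (nat \<Rightarrow> real) \<Rightarrow> nat \<Rightarrow> real" where
  "exp_tilt \<gamma> a n = exp (\<gamma> * real n) * a n"

lemma conv2_seq_nonneg: "(\<And>k. 0 \<le> a k) \<Longrightarrow> 0 \<le> conv2_seq a n"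
  unfolding conv2_seq_def by (intro sum_nonneg mult_nonneg_nonneg)

lemma conv2_eq_conv2_seq: "conv2 F = conv2_seq (pmf F)"
  by (simp add: fun_eq_iff conv2_def conv2_seq_def)

lemma exp_tilt_0 [simp]: "exp_tilt 0 a = a"
  by (simp add: fun_eq_iff exp_tilt_def)

lemma exp_tilt_exp_tilt: "exp_tilt g (exp_tilt \<gamma> a) = exp_tilt (\<gamma> + g) a"
  by (simp add: fun_eq_iff exp_tilt_def distrib_right exp_add)

lemma exp_tilt_nonneg: "(\<And>k. 0 \<le> a k) \<Longrightarrow> 0 \<le> exp_tilt \<gamma> a n"
  by (simp add: exp_tilt_def)

lemma exp_tilt_pos_iff [simp]: "0 < exp_tilt \<gamma> a n \<longleftrightarrow> 0 < a n"
  by (simp add: exp_tilt_def zero_less_mult_iff)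

lemma exp_tilt_Suc_ratio: "exp_tilt \<gamma> a (Suc n) / exp_tilt \<gamma> a n = exp \<gamma> * (a (Suc n) / a n)"
proof -
  have "exp (\<gamma> * real (Suc n)) = exp (\<gamma> * real n) * exp \<gamma>"
    by (simp add: distrib_left exp_add)
  then have "exp_tilt \<gamma> a (Suc n) / exp_tilt \<gamma> a n
      = (exp (\<gamma> * real n) * (exp \<gamma> * a (Suc n))) / (exp (\<gamma> * real n) * a n)"
    by (simp only: exp_tilt_def mult.assoc)
  also have "\<dots> = exp \<gamma> * (a (Suc n) / a n)"
    by (subst mult_divide_mult_cancel_left) simp_all
  finally show ?thesis .
qed

lemma conv2_seq_exp_tilt: "conv2_seq (exp_tilt \<gamma> a) n = exp (\<gamma> * real n) * conv2_seq a n"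
  unfolding conv2_seq_def exp_tilt_def sum_distrib_left
proof (intro sum.cong refl)
  fix k assume "k \<in> {..n}"
  then have "exp (\<gamma> * real k) * exp (\<gamma> * real (n - k)) = exp (\<gamma> * real n)"
    by (simp add: of_nat_diff algebra_simps flip: exp_add)
  then show "exp (\<gamma> * real k) * a k * (exp (\<gamma> * real (n - k)) * a (n - k)) =
      exp (\<gamma> * real n) * (a k * a (n - k))"
    by (metis mult.assoc mult.left_commute)
qed

lemma conv2_seq_exp_tilt_ratio:
  "conv2_seq (exp_tilt \<gamma> a) n / exp_tilt \<gamma> a n = conv2_seq a n / a n"
  by (simp add: conv2_seq_exp_tilt exp_tilt_def)

lemma sum_conv2_seq_triangle:
  "(\<Sum>n\<le>X. conv2_seq a n) = (\<Sum>(i, j)\<in>{(i, j). i + j \<le> X}. a i * a j)"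
  unfolding conv2_seq_def by (rule sum.triangle_reindex_eq[symmetric])

lemma conv2_seq_ge_twice_head:
  assumes nonneg: "\<And>k. 0 \<le> a k" and "2 * K < n"
  shows "2 * (\<Sum>k\<le>K. a k * a (n - k)) \<le> conv2_seq a n"
proof -
  let ?f = "\<lambda>k. a k * a (n - k)"
  have inj: "inj_on (\<lambda>k. n - k) {..K}"
    using assms(2) by (intro inj_onI) auto
  have "(\<Sum>k\<in>(\<lambda>k. n - k) ` {..K}. ?f k) = (\<Sum>k\<le>K. ?f (n - k))"
    by (simp add: sum.reindex[OF inj])
  also have "\<dots> = (\<Sum>k\<le>K. ?f k)"
    using assms(2) by (intro sum.cong) (auto simp: mult.commute)
  finally have mirror: "(\<Sum>k\<in>(\<lambda>k. n - k) ` {..K}. ?f k) = (\<Sum>k\<le>K. ?f k)" .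
  have "2 * (\<Sum>k\<le>K. ?f k) = (\<Sum>k\<in>{..K} \<union> (\<lambda>k. n - k) ` {..K}. ?f k)"
    using assms(2) mirror by (subst sum.union_disjoint) auto
  also have "\<dots> \<le> (\<Sum>k\<le>n. ?f k)"
    using assms(2) by (intro sum_mono2) (auto intro: mult_nonneg_nonneg nonneg)
  finally show ?thesis by (simp add: conv2_seq_def)
qed

lemma sum_Un_le_nonneg:
  fixes f :: "'a \<Rightarrow> real"
  assumes "finite A" "finite B" "\<And>x. 0 \<le> f x"
  shows "sum f (A \<union> B) \<le> sum f A + sum f B"
  using sum_Un[OF assms(1,2), of f] sum_nonneg[of "A \<inter> B" f, OF assms(3)] by linarith

lemma sum_times_atMost:
  "(\<Sum>(i, j)\<in>{..A} \<times> {..B}. f i * g j) = (\<Sum>i\<le>A. f i) * (\<Sum>j\<le>B. g j :: real)"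
  by (simp add: sum_product sum.cartesian_product)

lemma crossing_index:
  fixes f :: "nat \<Rightarrow> 'a :: linorder"
  assumes "f N \<le> a" "a < f M" "N \<le> M"
  obtains Y where "N \<le> Y" "f Y \<le> a" "a < f (Suc Y)"
  using assms
proof (induction M)
  case 0
  then show ?case by simp
next
  case (Suc M)
  show ?case
  proof (cases "N \<le> M \<and> a < f M")
    case True
    then show ?thesis using Suc.IH Suc.prems(1,2) by blast
  next
    case False
    then have "N \<le> M \<and> f M \<le> a \<or> N = Suc M" using Suc.prems(4) by auto
    then show ?thesis using Suc.prems by auto
  qed
qed

lemma sum_conv2_seq_add_diff_le:
  fixes b u :: "nat \<Rightarrow> real"
  assumes b: "\<And>k. 0 \<le> b k" and u: "\<And>k. 0 \<le> u k"
  shows "(\<Sum>n\<le>2 * Y + 1. conv2_seq (\<lambda>k. b k + u k) n - conv2_seq b n)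
    \<le> 2 * (\<Sum>i\<le>Y. u i) * (\<Sum>i\<le>2 * Y + 1. u i)
      + 2 * (\<Sum>j\<le>2 * Y + 1. b j) * (\<Sum>i\<le>2 * Y + 1. u i)"
proof -
  define X where "X = 2 * Y + 1"
  define P where "P = {(i, j). i + j \<le> X}"
  have P: "P \<subseteq> {..X} \<times> {..X}" "P \<subseteq> {..Y} \<times> {..X} \<union> {..X} \<times> {..Y}"
    unfolding P_def X_def by auto
  have uu: "(\<Sum>(i, j)\<in>P. u i * u j) \<le> 2 * (\<Sum>i\<le>Y. u i) * (\<Sum>i\<le>X. u i)"
  proof -
    have "(\<Sum>(i, j)\<in>P. u i * u j) \<le> (\<Sum>(i, j)\<in>{..Y} \<times> {..X} \<union> {..X} \<times> {..Y}. u i * u j)"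
      using P(2) by (intro sum_mono2) (auto intro: mult_nonneg_nonneg u)
    also have "\<dots> \<le> (\<Sum>(i, j)\<in>{..Y} \<times> {..X}. u i * u j) + (\<Sum>(i, j)\<in>{..X} \<times> {..Y}. u i * u j)"
      by (rule sum_Un_le_nonneg) (auto intro: mult_nonneg_nonneg u)
    finally show ?thesis by (simp add: sum_times_atMost mult_ac)
  qed
  have ub: "(\<Sum>(i, j)\<in>P. u i * b j) \<le> (\<Sum>i\<le>X. u i) * (\<Sum>j\<le>X. b j)"
    and bu: "(\<Sum>(i, j)\<in>P. b i * u j) \<le> (\<Sum>j\<le>X. b j) * (\<Sum>i\<le>X. u i)"
    unfolding sum_times_atMost[symmetric] using P(1) by (auto intro!: sum_mono2 mult_nonneg_nonneg u b)
  have "(\<Sum>n\<le>X. conv2_seq (\<lambda>k. b k + u k) n - conv2_seq b n)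
      = (\<Sum>(i, j)\<in>P. u i * u j + u i * b j + b i * u j)"
    unfolding sum_subtractf sum_conv2_seq_triangle P_def[symmetric]
    by (simp add: sum_subtractf[symmetric] case_prod_unfold algebra_simps)
  also have "\<dots> = (\<Sum>(i, j)\<in>P. u i * u j) + (\<Sum>(i, j)\<in>P. u i * b j) + (\<Sum>(i, j)\<in>P. b i * u j)"
    by (simp add: sum.distrib case_prod_unfold)
  finally show ?thesis
    using uu ub bu mult.commute[of "\<Sum>i\<le>X. u i" "\<Sum>j\<le>X. b j"] unfolding X_def[symmetric]
    by linarith
qed

lemma exp_tilt_excess_nonneg:
  assumes "\<And>k. 0 \<le> b k" "0 \<le> g"
  shows "0 \<le> exp_tilt g b i - b i"
  using assms(1)[of i] assms(2) by (simp add: exp_tilt_def mult_le_cancel_right1)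

lemma exists_exp_tilt_excess_less:
  fixes b :: "nat \<Rightarrow> real"
  assumes "0 < \<eta>"
  obtains g where "0 < g" "(\<Sum>i\<le>N. exp_tilt g b i - b i) < \<eta>"
proof -
  have "((\<lambda>g. \<Sum>i\<le>N. exp_tilt g b i - b i) \<longlongrightarrow> (\<Sum>i\<le>N. exp_tilt 0 b i - b i)) (at_right 0)"
    unfolding exp_tilt_def by (intro tendsto_intros)
  then have "eventually (\<lambda>g. (\<Sum>i\<le>N. exp_tilt g b i - b i) < \<eta>) (at_right 0)"
    using assms by (simp add: order_tendstoD(2))
  from eventually_happens'[OF trivial_limit_at_right_real eventually_conj[OF eventually_at_right_less this]]
  show thesis
    using that by blast
qed

lemma exp_tilt_excess_unbounded:
  fixes b :: "nat \<Rightarrow> real"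
  assumes nonneg: "\<And>k. 0 \<le> b k" and "summable b" "\<not> summable (exp_tilt g b)" "0 \<le> g"
  obtains M where "B < (\<Sum>i\<le>M. exp_tilt g b i - b i)"
proof (cases "\<exists>M. B < (\<Sum>i\<le>M. exp_tilt g b i - b i)")
  case False
  have "summable (\<lambda>i. exp_tilt g b i - b i)"
  proof (rule summableI_nonneg_bounded[of _ B])
    fix n
    have "(\<Sum>i<n. exp_tilt g b i - b i) \<le> (\<Sum>i\<le>n. exp_tilt g b i - b i)"
      using assms by (intro sum_mono2 exp_tilt_excess_nonneg) auto
    then show "(\<Sum>i<n. exp_tilt g b i - b i) \<le> B"
      using False by (meson not_less order_trans)
  qed (rule exp_tilt_excess_nonneg[OF nonneg \<open>0 \<le> g\<close>])
  then have "summable (\<lambda>i. (exp_tilt g b i - b i) + b i)"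
    using \<open>summable b\<close> by (rule summable_add)
  with assms(3) show ?thesis
    by simp
qed blast

lemma sum_conv2_seq_exp_tilt_diff_ge:
  fixes b :: "nat \<Rightarrow> real"
  assumes nonneg: "\<And>k. 0 \<le> b k" and "0 \<le> g" "0 \<le> C"
    and big: "\<And>n. N \<le> n \<Longrightarrow> C * b n \<le> conv2_seq b n"
  shows "C * ((\<Sum>i\<le>X. exp_tilt g b i - b i) - (\<Sum>i\<le>N. exp_tilt g b i - b i))
    \<le> (\<Sum>n\<le>X. conv2_seq (exp_tilt g b) n - conv2_seq b n)"
proof -
  define u where "u i = exp_tilt g b i - b i" for i
  define D where "D n = conv2_seq (exp_tilt g b) n - conv2_seq b n" for n
  have u_nonneg: "0 \<le> u i" for i
    unfolding u_def using nonneg \<open>0 \<le> g\<close> by (rule exp_tilt_excess_nonneg)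
  have D_eq: "D n = (exp (g * real n) - 1) * conv2_seq b n" for n
    by (simp add: D_def conv2_seq_exp_tilt algebra_simps)
  have exp_ge_1: "1 \<le> exp (g * real n)" for n
    using \<open>0 \<le> g\<close> by simp
  have "(\<Sum>i\<le>X. u i) \<le> (\<Sum>i\<in>{..N} \<union> {N..X}. u i)"
    by (intro sum_mono2 u_nonneg) auto
  also have "\<dots> \<le> (\<Sum>i\<le>N. u i) + (\<Sum>i\<in>{N..X}. u i)"
    by (intro sum_Un_le_nonneg u_nonneg) auto
  finally have "(\<Sum>i\<le>X. u i) - (\<Sum>i\<le>N. u i) \<le> (\<Sum>i\<in>{N..X}. u i)"
    by simp
  then have "C * ((\<Sum>i\<le>X. u i) - (\<Sum>i\<le>N. u i)) \<le> C * (\<Sum>i\<in>{N..X}. u i)"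
    using \<open>0 \<le> C\<close> by (rule mult_left_mono)
  also have "\<dots> = (\<Sum>n\<in>{N..X}. C * u n)"
    by (rule sum_distrib_left)
  also have "\<dots> \<le> (\<Sum>n\<in>{N..X}. D n)"
  proof (rule sum_mono)
    fix n assume "n \<in> {N..X}"
    then have "(exp (g * real n) - 1) * (C * b n) \<le> (exp (g * real n) - 1) * conv2_seq b n"
      using big exp_ge_1[of n] by (intro mult_left_mono) auto
    then show "C * u n \<le> D n"
      by (simp add: D_eq u_def exp_tilt_def algebra_simps)
  qed
  also have "\<dots> \<le> (\<Sum>n\<le>X. D n)"
    using exp_ge_1 conv2_seq_nonneg[OF nonneg] by (intro sum_mono2) (auto simp: D_eq)
  finally show ?thesis
    by (simp add: u_def D_def)
qed

(*
  With U y the sum of exp_tilt g b i - b i over i <= y, the sum of (exp (g n) - 1) (b * b) n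
  over n <= 2 Y + 1 is at least (2 m + d) (U (2 Y + 1) - U N) and at most
  2 U Y U (2 Y + 1) + 2 m U (2 Y + 1).  Taking g so small that U N is tiny and Y the last index
  with U Y <= d / 4 makes the two bounds incompatible.
*)
lemma not_eventually_conv2_seq_ge:
  fixes b :: "nat \<Rightarrow> real"
  assumes nonneg: "\<And>k. 0 \<le> b k" and summable: "summable b"
    and heavy: "\<And>g. 0 < g \<Longrightarrow> \<not> summable (exp_tilt g b)" and d: "0 < d"
  shows "\<not> eventually (\<lambda>n. (2 * suminf b + d) * b n \<le> conv2_seq b n) sequentially"
proof
  define m where "m = suminf b"
  assume "eventually (\<lambda>n. (2 * suminf b + d) * b n \<le> conv2_seq b n) sequentially"
  then obtain N where big: "\<And>n. N \<le> n \<Longrightarrow> (2 * m + d) * b n \<le> conv2_seq b n"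
    unfolding m_def eventually_sequentially by blast
  have "0 \<le> m"
    unfolding m_def using summable nonneg by (rule suminf_nonneg)
  define \<eta> where "\<eta> = d\<^sup>2 / (8 * (2 * m + d))"
  have \<eta>: "0 < \<eta>" "\<eta> \<le> d / 4" "(2 * m + d) * \<eta> = d\<^sup>2 / 8"
    using d \<open>0 \<le> m\<close> by (auto simp: \<eta>_def field_simps power2_eq_square)
  obtain g where g: "0 < g" "(\<Sum>i\<le>N. exp_tilt g b i - b i) < \<eta>"
    using exists_exp_tilt_excess_less[OF \<eta>(1)] .
  define U where "U y = (\<Sum>i\<le>y. exp_tilt g b i - b i)" for y
  have U_mono: "U y \<le> U y'" if "y \<le> y'" for y y'
    unfolding U_def using that nonneg g(1) by (intro sum_mono2 exp_tilt_excess_nonneg) auto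
  obtain M where M: "d / 4 < U M"
    unfolding U_def by (rule exp_tilt_excess_unbounded[OF nonneg summable heavy[OF g(1)]]) (use g(1) in simp)
  have "U N \<le> d / 4"
    using g(2) \<eta>(2) by (simp add: U_def)
  with M U_mono[of M N] have "N \<le> M"
    by (cases "N \<le> M") auto
  with \<open>U N \<le> d / 4\<close> M obtain Y where Y: "N \<le> Y" "U Y \<le> d / 4" "d / 4 < U (Suc Y)"
    by (rule crossing_index)
  define X where "X = 2 * Y + 1"
  have UX: "d / 4 < U X"
    using Y(3) U_mono[of "Suc Y" X] by (simp add: X_def)
  have "(2 * m + d) * (U X - U N) \<le> (\<Sum>n\<le>X. conv2_seq (exp_tilt g b) n - conv2_seq b n)"
    unfolding U_def by (rule sum_conv2_seq_exp_tilt_diff_ge[OF nonneg _ _ big]) (use g(1) d \<open>0 \<le> m\<close> in auto)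
  also have "\<dots> \<le> 2 * U Y * U X + 2 * (\<Sum>j\<le>X. b j) * U X"
    using sum_conv2_seq_add_diff_le[of b "\<lambda>k. exp_tilt g b k - b k" Y,
        OF nonneg exp_tilt_excess_nonneg[OF nonneg less_imp_le[OF g(1)]]]
    by (simp add: U_def X_def)
  also have "\<dots> \<le> 2 * (d / 4) * U X + 2 * m * U X"
    using Y(2) UX d sum_le_suminf[OF summable, of "{..X}"] nonneg
    by (intro add_mono mult_right_mono) (auto simp: m_def)
  finally have "d / 2 * U X \<le> (2 * m + d) * U N"
    by (simp add: algebra_simps)
  also have "\<dots> \<le> (2 * m + d) * \<eta>"
    using g(2) d \<open>0 \<le> m\<close> by (intro mult_left_mono) (auto simp: U_def)
  also have "\<dots> = d\<^sup>2 / 8"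
    by (rule \<eta>(3))
  finally have "U X \<le> d / 4"
    using d by (simp add: field_simps power2_eq_square)
  then show False
    using UX by linarith
qed

lemma tendsto_lowerbound_frequently:
  fixes f :: "'a \<Rightarrow> 'b :: linorder_topology"
  assumes "(f \<longlongrightarrow> x) F" "frequently (\<lambda>i. a \<le> f i) F"
  shows "a \<le> x"
proof (rule ccontr)
  assume "\<not> a \<le> x"
  then have "eventually (\<lambda>i. f i < a) F"
    using order_tendstoD(2)[OF assms(1)] by simp
  then show False
    using assms(2) by (simp add: frequently_def not_le)
qed

lemma power_mult_le_shift:
  fixes b :: "nat \<Rightarrow> real"
  assumes step: "\<And>j. M \<le> j \<Longrightarrow> r * b j \<le> b (j - 1)" and "0 \<le> r" and "M + i \<le> n"
  shows "r ^ i * b n \<le> b (n - i)"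
  using assms(3)
proof (induction i)
  case 0
  then show ?case by simp
next
  case (Suc i)
  have "r ^ Suc i * b n = r * (r ^ i * b n)"
    by simp
  also have "\<dots> \<le> r * b (n - i)"
    using Suc by (intro mult_left_mono \<open>0 \<le> r\<close>) simp
  also have "\<dots> \<le> b (n - i - 1)"
    using Suc.prems by (intro step) simp
  finally show ?case
    by simp
qed

locale conv2_ratio_seq =
  fixes b :: "nat \<Rightarrow> real" and c :: real
  assumes nonneg: "0 \<le> b n"
    and eventually_pos: "eventually (\<lambda>n. 0 < b n) sequentially"
    and conv2_ratio: "(\<lambda>n. conv2_seq b n / b n) \<longlonglongrightarrow> c"
    and slow_decay: "0 < r \<Longrightarrow> r < 1 \<Longrightarrow> eventually (\<lambda>n. r * b n \<le> b (n - 1)) sequentially"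
begin

lemma head_sum_weighted_le:
  assumes r: "0 < r" "r < 1" and "0 \<le> L"
    and jump: "frequently (\<lambda>n. L * b n \<le> b (n - 1)) sequentially"
  shows "b 0 + L * (\<Sum>k=1..K. r ^ (k - 1) * b k) \<le> c / 2"
proof -
  define B where "B = 2 * (b 0 + L * (\<Sum>k=1..K. r ^ (k - 1) * b k))"
  obtain M where M: "\<And>j. M \<le> j \<Longrightarrow> 0 < b j \<and> r * b j \<le> b (j - 1)"
    using eventually_conj[OF eventually_pos slow_decay[OF r]]
    unfolding eventually_sequentially by blast
  have "B \<le> conv2_seq b n / b n" if n: "M + 2 * K < n" and jump_n: "L * b n \<le> b (n - 1)" for n
  proof -
    have tail: "r ^ (k - 1) * (L * b n) \<le> b (n - k)" if "k \<in> {1..K}" for k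
    proof -
      have "r ^ (k - 1) * (L * b n) \<le> r ^ (k - 1) * b (n - 1)"
        using jump_n r by (intro mult_left_mono) auto
      also have "\<dots> \<le> b (n - 1 - (k - 1))"
        using M that n r by (intro power_mult_le_shift[of M]) auto
      finally show ?thesis
        using that by (simp add: diff_diff_add)
    qed
    have "B * b n = 2 * (b 0 * b n + (\<Sum>k=1..K. b k * (r ^ (k - 1) * (L * b n))))"
      by (simp add: B_def sum_distrib_left sum_distrib_right algebra_simps)
    also have "\<dots> \<le> 2 * (b 0 * b n + (\<Sum>k=1..K. b k * b (n - k)))"
      using tail by (intro mult_left_mono add_left_mono sum_mono mult_left_mono nonneg) auto
    also have "\<dots> = 2 * (\<Sum>k\<le>K. b k * b (n - k))"
      by (simp add: atMost_atLeast0 sum.atLeast_Suc_atMost)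
    also have "\<dots> \<le> conv2_seq b n"
      using n by (intro conv2_seq_ge_twice_head nonneg) auto
    finally show ?thesis
      using M[of n] n by (simp add: pos_le_divide_eq)
  qed
  then have "frequently (\<lambda>n. B \<le> conv2_seq b n / b n) sequentially"
    using frequently_eventually_conj[OF jump eventually_gt_at_top[of "M + 2 * K"]]
    by (auto elim: frequently_elim1)
  then have "B \<le> c"
    by (rule tendsto_lowerbound_frequently[OF conv2_ratio])
  then show ?thesis
    by (simp add: B_def)
qed

lemma head_sum_le:
  assumes "0 < L"
    and jumps: "\<And>L'. 0 < L' \<Longrightarrow> L' < L \<Longrightarrow> frequently (\<lambda>n. L' * b n \<le> b (n - 1)) sequentially"
  shows "b 0 + L * (\<Sum>k=1..K. b k) \<le> c / 2"
proof -
  let ?B = "\<lambda>r. b 0 + r * L * (\<Sum>k=1..K. r ^ (k - 1) * b k)"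
  have "(?B \<longlongrightarrow> ?B 1) (at_left 1)"
    by (intro tendsto_intros)
  moreover have "eventually (\<lambda>r. ?B r \<le> c / 2) (at_left 1)"
    using eventually_at_left_real[OF zero_less_one]
  proof (rule eventually_mono)
    fix r :: real assume "r \<in> {0<..<1}"
    then show "?B r \<le> c / 2"
      using \<open>0 < L\<close> jumps[of "r * L"] by (intro head_sum_weighted_le) auto
  qed
  ultimately have "?B 1 \<le> c / 2"
    by (intro tendsto_le[OF trivial_limit_at_left_real tendsto_const])
  then show ?thesis
    by simp
qed

lemma head_sum_le_frequently:
  assumes "0 < L" and jump: "frequently (\<lambda>n. L * b n \<le> b (n - 1)) sequentially"
  shows "b 0 + L * (\<Sum>k=1..K. b k) \<le> c / 2"
proof (rule head_sum_le[OF \<open>0 < L\<close>])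
  fix L' assume "0 < L'" "L' < L"
  then have "L * b n \<le> b (n - 1) \<Longrightarrow> L' * b n \<le> b (n - 1)" for n
    using mult_right_mono[of L' L "b n"] nonneg[of n] by linarith
  then show "frequently (\<lambda>n. L' * b n \<le> b (n - 1)) sequentially"
    by (rule frequently_elim1[OF jump])
qed

lemma partial_sum_le: "(\<Sum>k<n. b k) \<le> c / 2"
proof -
  have "b 0 + 1 * (\<Sum>k=1..n. b k) \<le> c / 2"
    using slow_decay by (intro head_sum_le) (auto intro: eventually_frequently)
  moreover have "(\<Sum>k<n. b k) \<le> (\<Sum>k\<le>n. b k)"
    by (intro sum_mono2 nonneg) auto
  ultimately show ?thesis
    by (simp add: atMost_atLeast0 sum.atLeast_Suc_atMost)
qed

lemma limit_nonneg: "0 \<le> c"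
  using partial_sum_le[of 0] by simp

lemma summable: "summable b"
  using nonneg partial_sum_le by (rule summableI_nonneg_bounded)

lemma twice_suminf_le: "2 * suminf b \<le> c"
  using suminf_le_const[OF summable partial_sum_le] by simp

lemma frequently_pred_less:
  assumes "1 \<le> k" "0 < b k"
  obtains L where "frequently (\<lambda>n. b (n - 1) < L * b n) sequentially"
proof
  define L where "L = (c + 1) / b k"
  show "frequently (\<lambda>n. b (n - 1) < L * b n) sequentially"
  proof (rule ccontr)
    assume "\<not> ?thesis"
    then have "eventually (\<lambda>n. L * b n \<le> b (n - 1)) sequentially"
      by (simp add: not_frequently not_less)
    moreover have "0 < L"
      using assms limit_nonneg by (simp add: L_def)
    ultimately have "b 0 + L * (\<Sum>j=1..k. b j) \<le> c / 2"
      by (intro head_sum_le_frequently eventually_frequently) simp_all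
    moreover have "b k \<le> (\<Sum>j=1..k. b j)"
      using assms by (intro member_le_sum nonneg) auto
    then have "c + 1 \<le> L * (\<Sum>j=1..k. b j)"
      using assms \<open>0 < L\<close> mult_left_mono[of "b k" _ L] by (simp add: L_def)
    ultimately show False
      using nonneg[of 0] limit_nonneg by linarith
  qed
qed

context
  assumes heavy: "\<And>g. 0 < g \<Longrightarrow> \<not> summable (exp_tilt g b)"
begin

lemma limit_eq_twice_suminf: "c = 2 * suminf b"
proof (rule antisym[OF _ twice_suminf_le], rule ccontr)
  define d where "d = (c - 2 * suminf b) / 2"
  assume "\<not> c \<le> 2 * suminf b"
  then have "0 < d" and "2 * suminf b + d < c"
    unfolding d_def by (simp_all add: field_simps)
  have "eventually (\<lambda>n. (2 * suminf b + d) * b n \<le> conv2_seq b n) sequentially"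
    using order_tendstoD(1)[OF conv2_ratio \<open>2 * suminf b + d < c\<close>] eventually_pos
    by eventually_elim (simp add: pos_less_divide_eq less_imp_le)
  with not_eventually_conv2_seq_ge[OF nonneg summable heavy \<open>0 < d\<close>] show False
    by contradiction
qed

lemma eventually_pred_less:
  assumes "1 \<le> k" "0 < b k" "1 < L"
  shows "eventually (\<lambda>n. b (n - 1) < L * b n) sequentially"
proof (rule ccontr)
  assume "\<not> ?thesis"
  then have "frequently (\<lambda>n. L * b n \<le> b (n - 1)) sequentially"
    by (simp add: not_eventually not_less)
  then have "b 0 + L * (\<Sum>j=1..K. b j) \<le> c / 2" for K
    using assms(3) by (intro head_sum_le_frequently) simp_all
  then have "b 0 + L * ((\<Sum>j\<le>K. b j) - b 0) \<le> c / 2" for K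
    by (simp add: atMost_atLeast0 sum.atLeast_Suc_atMost)
  moreover have "(\<lambda>K. b 0 + L * ((\<Sum>j\<le>K. b j) - b 0)) \<longlonglongrightarrow> b 0 + L * (suminf b - b 0)"
    by (intro tendsto_intros summable_LIMSEQ' summable)
  ultimately have "b 0 + L * (suminf b - b 0) \<le> c / 2"
    by (intro tendsto_le[OF trivial_limit_sequentially tendsto_const]) auto
  moreover have "b 0 + b k \<le> suminf b"
    using sum_le_suminf[OF summable, of "{0, k}"] nonneg assms(1) by simp
  then have "0 < suminf b - b 0"
    using assms(2) by linarith
  from mult_strict_right_mono[OF assms(3) this]
  have "suminf b - b 0 < L * (suminf b - b 0)"
    by simp
  ultimately show False
    using limit_eq_twice_suminf by linarith
qed

lemma pred_ratio_tendsto_1: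
  assumes "1 \<le> k" "0 < b k"
  shows "(\<lambda>n. b (n - 1) / b n) \<longlonglongrightarrow> 1"
proof (rule order_tendstoI)
  fix y :: real assume "y < 1"
  define r where "r = (max y 0 + 1) / 2"
  have "0 < r" "r < 1" "y < r"
    using \<open>y < 1\<close> by (auto simp: r_def)
  show "eventually (\<lambda>n. y < b (n - 1) / b n) sequentially"
    using slow_decay[OF \<open>0 < r\<close> \<open>r < 1\<close>] eventually_pos
    by eventually_elim (metis \<open>y < r\<close> mult_strict_right_mono order_less_le_trans pos_less_divide_eq)
next
  fix y :: real assume "1 < y"
  show "eventually (\<lambda>n. b (n - 1) / b n < y) sequentially"
    using eventually_pred_less[OF assms \<open>1 < y\<close>] eventually_pos
    by eventually_elim (simp add: pos_divide_less_eq)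
qed

end

end

lemma eventually_pred_ge_if_liminf:
  fixes a :: "nat \<Rightarrow> real"
  assumes nonneg: "\<And>n. 0 \<le> a n" and li: "ereal L \<le> liminf (\<lambda>x. ereal (a (x - 1) / a x))"
    and "0 < r" "r < L"
  shows "eventually (\<lambda>x. 0 < a x \<and> r * a x \<le> a (x - 1)) sequentially"
proof -
  have "eventually (\<lambda>x. ereal r < ereal (a (x - 1) / a x)) sequentially"
    using li unfolding le_Liminf_iff by (rule allE[where x = "ereal r"]) (use \<open>r < L\<close> in simp)
  then have "eventually (\<lambda>x. r < a (x - 1) / a x) sequentially"
    by simp
  then show ?thesis
  proof (rule eventually_mono)
    fix x assume ratio: "r < a (x - 1) / a x"
    \<comment> \<open>as x / 0 = 0, a ratio above r > 0 forces a x > 0\<close>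
    then have "a x \<noteq> 0"
      using \<open>0 < r\<close> by auto
    then have "0 < a x"
      using nonneg[of x] by simp
    with ratio show "0 < a x \<and> r * a x \<le> a (x - 1)"
      by (simp add: pos_less_divide_eq)
  qed
qed

lemma exp_tilt_slow_decay:
  fixes a :: "nat \<Rightarrow> real"
  assumes nonneg: "\<And>n. 0 \<le> a n"
    and li: "ereal (exp \<gamma>) \<le> liminf (\<lambda>x. ereal (a (x - 1) / a x))"
    and "0 < r" "r < 1"
  shows "eventually (\<lambda>x. 0 < exp_tilt \<gamma> a x \<and> r * exp_tilt \<gamma> a x \<le> exp_tilt \<gamma> a (x - 1))
    sequentially"
proof -
  have "0 < r * exp \<gamma>" "r * exp \<gamma> < exp \<gamma>"
    using assms(3,4) by simp_all
  from eventually_pred_ge_if_liminf[OF nonneg li this] eventually_ge_at_top[of 1]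
  show ?thesis
  proof eventually_elim
    case (elim x)
    have "r * exp_tilt \<gamma> a x = exp (\<gamma> * real (x - 1)) * (r * exp \<gamma> * a x)"
      using elim by (simp add: exp_tilt_def of_nat_diff algebra_simps flip: exp_add)
    also have "\<dots> \<le> exp_tilt \<gamma> a (x - 1)"
      using elim by (simp add: exp_tilt_def)
    finally show ?case
      using elim by simp
  qed
qed

lemma succ_ratio_tendsto_if_exp_tilt:
  fixes a :: "nat \<Rightarrow> real"
  assumes "(\<lambda>n. exp_tilt \<gamma> a (n - 1) / exp_tilt \<gamma> a n) \<longlonglongrightarrow> 1"
  shows "(\<lambda>n. a (Suc n) / a n) \<longlonglongrightarrow> exp (- \<gamma>)"
proof -
  have "(\<lambda>n. inverse (exp_tilt \<gamma> a n / exp_tilt \<gamma> a (Suc n))) \<longlonglongrightarrow> inverse 1"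
    using LIMSEQ_Suc[OF assms] by (intro tendsto_inverse) simp_all
  then have "(\<lambda>n. exp (- \<gamma>) * (exp_tilt \<gamma> a (Suc n) / exp_tilt \<gamma> a n)) \<longlonglongrightarrow> exp (- \<gamma>) * 1"
    by (intro tendsto_intros) simp
  moreover have "exp (- \<gamma>) * (exp_tilt \<gamma> a (Suc n) / exp_tilt \<gamma> a n) = a (Suc n) / a n" for n
    by (simp add: exp_tilt_Suc_ratio mult.assoc[symmetric] exp_add[symmetric])
  ultimately show ?thesis
    by simp
qed

lemma phi_finite_iff: "phi_finite F \<gamma> \<longleftrightarrow> summable (exp_tilt \<gamma> (pmf F))"
  by (simp add: phi_finite_def exp_tilt_def[abs_def])

lemma phi_eq_suminf: "phi F \<gamma> = suminf (exp_tilt \<gamma> (pmf F))"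
  by (simp add: phi_def exp_tilt_def[abs_def])

lemma summable_pmf_nat: "summable (pmf (F :: nat pmf))"
proof (rule summableI_nonneg_bounded)
  fix n
  have "(\<Sum>i<n. pmf F i) = measure_pmf.prob F {..<n}"
    by (simp add: measure_measure_pmf_finite)
  also have "\<dots> \<le> 1"
    by (rule measure_pmf.prob_le_1)
  finally show "(\<Sum>i<n. pmf F i) \<le> 1" .
qed simp

lemma gamma_hat_nonneg: "0 \<le> gamma_hat F"
proof -
  have "phi_finite F 0"
    using summable_pmf_nat[of F] by (simp add: phi_finite_iff)
  then have "ereal 0 \<in> {ereal \<gamma> | \<gamma>. phi_finite F \<gamma>}"
    by blast
  then have "ereal 0 \<le> gamma_hat F"
    unfolding gamma_hat_def by (rule Sup_upper)
  then show ?thesis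
    by (simp add: zero_ereal_def)
qed

lemma not_summable_exp_tilt_beyond_gamma_hat:
  assumes "gamma_hat F = ereal \<gamma>" "0 < g"
  shows "\<not> summable (exp_tilt g (exp_tilt \<gamma> (pmf F)))"
proof
  assume "summable (exp_tilt g (exp_tilt \<gamma> (pmf F)))"
  then have "phi_finite F (\<gamma> + g)"
    by (simp add: phi_finite_iff exp_tilt_exp_tilt)
  then have "ereal (\<gamma> + g) \<in> {ereal \<gamma> | \<gamma>. phi_finite F \<gamma>}"
    by blast
  then have "ereal (\<gamma> + g) \<le> gamma_hat F"
    unfolding gamma_hat_def by (rule Sup_upper)
  then show False
    using assms by simp
qed

lemma infinite_set_pmf_obtains_pos:
  fixes F :: "nat pmf"
  assumes "infinite (set_pmf F)"
  obtains k where "1 \<le> k" "0 < pmf F k"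
proof -
  from infinite_imp_nonempty[OF infinite_remove[OF assms, of 0]]
  obtain k where "k \<in> set_pmf F" "k \<noteq> 0"
    by blast
  then show ?thesis
    using that[of k] by (simp add: pmf_positive)
qed

lemma conv2_ratio_seq_exp_tilt:
  fixes F :: "nat pmf"
  assumes li: "ereal (exp \<gamma>) \<le> liminf (\<lambda>x. ereal (pmf F (x - 1) / pmf F x))"
    and "c \<noteq> 0" and equiv: "conv2 F \<sim>[sequentially] (\<lambda>n. c * pmf F n)"
  shows "conv2_ratio_seq (exp_tilt \<gamma> (pmf F)) c"
proof
  note decay = exp_tilt_slow_decay[OF pmf_nonneg li]
  have "eventually (\<lambda>n. 0 < exp_tilt \<gamma> (pmf F) n \<and>
      1 / 2 * exp_tilt \<gamma> (pmf F) n \<le> exp_tilt \<gamma> (pmf F) (n - 1)) sequentially"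
    by (rule decay) simp_all
  then show "eventually (\<lambda>n. 0 < exp_tilt \<gamma> (pmf F) n) sequentially"
    by (rule eventually_mono) (erule conjunct1)
  then have pos: "eventually (\<lambda>n. 0 < pmf F n) sequentially"
    by simp
  have "(\<lambda>n. conv2 F n / pmf F n) \<sim>[sequentially] (\<lambda>n. c * pmf F n / pmf F n)"
    by (rule asymp_equiv_divide[OF equiv asymp_equiv_refl])
  also have "\<dots> \<sim>[sequentially] (\<lambda>_. c)"
    by (rule asymp_equiv_refl_ev, use pos in \<open>rule eventually_mono\<close>) simp
  finally show "(\<lambda>n. conv2_seq (exp_tilt \<gamma> (pmf F)) n / exp_tilt \<gamma> (pmf F) n) \<longlonglongrightarrow> c"
    unfolding conv2_seq_exp_tilt_ratio conv2_eq_conv2_seq[symmetric] by (rule asymp_equivD_const)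
  show "eventually (\<lambda>n. r * exp_tilt \<gamma> (pmf F) n \<le> exp_tilt \<gamma> (pmf F) (n - 1)) sequentially"
    if "0 < r" "r < 1" for r
    using decay[OF that] by (rule eventually_mono) (erule conjunct2)
qed (simp add: exp_tilt_def)

lemma S_lattice_if_liminf_and_conv2_asymp_equiv:
  fixes F :: "nat pmf"
  assumes unbounded: "infinite (set_pmf F)" and gamma_hat: "gamma_hat F = ereal \<gamma>"
    and li: "ereal (exp \<gamma>) \<le> liminf (\<lambda>x. ereal (pmf F (x - 1) / pmf F x))"
    and "0 < c" and equiv: "conv2 F \<sim>[sequentially] (\<lambda>n. c * pmf F n)"
  shows "S_lattice F \<gamma>"
proof -
  define b where "b = exp_tilt \<gamma> (pmf F)"
  interpret conv2_ratio_seq b c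
    unfolding b_def using li \<open>0 < c\<close> equiv by (intro conv2_ratio_seq_exp_tilt) auto
  have heavy: "\<not> summable (exp_tilt g b)" if "0 < g" for g
    unfolding b_def using gamma_hat that by (rule not_summable_exp_tilt_beyond_gamma_hat)
  obtain k where "1 \<le> k" "0 < pmf F k"
    using unbounded by (rule infinite_set_pmf_obtains_pos)
  then have "(\<lambda>n. b (n - 1) / b n) \<longlonglongrightarrow> 1"
    by (intro pred_ratio_tendsto_1[OF heavy]) (simp_all add: b_def)
  then have "(\<lambda>n. pmf F (Suc n) / pmf F n) \<longlonglongrightarrow> exp (- \<gamma>)"
    unfolding b_def by (rule succ_ratio_tendsto_if_exp_tilt)
  moreover have "0 \<le> \<gamma>"
    using gamma_hat_nonneg[of F] gamma_hat by simp
  moreover have "phi_finite F \<gamma>"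
    using summable by (simp add: phi_finite_iff b_def)
  moreover have "c = 2 * phi F \<gamma>"
    using limit_eq_twice_suminf[OF heavy] by (simp add: phi_eq_suminf b_def)
  ultimately show ?thesis
    using unbounded equiv by (simp add: S_lattice_def)
qed

lemma liminf_pred_ratio_if_S_lattice:
  assumes "S_lattice F \<gamma>"
  shows "liminf (\<lambda>x. ereal (pmf F (x - 1) / pmf F x)) = ereal (exp \<gamma>)"
proof -
  have "(\<lambda>n. pmf F (Suc n) / pmf F n) \<longlonglongrightarrow> exp (- \<gamma>)"
    using assms by (simp add: S_lattice_def)
  then have "(\<lambda>n. inverse (pmf F (Suc n) / pmf F n)) \<longlonglongrightarrow> inverse (exp (- \<gamma>))"
    by (rule tendsto_inverse) simp
  then have "(\<lambda>n. pmf F (Suc n - 1) / pmf F (Suc n)) \<longlonglongrightarrow> exp \<gamma>"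
    by (simp add: exp_minus)
  then have "(\<lambda>x. pmf F (x - 1) / pmf F x) \<longlonglongrightarrow> exp \<gamma>"
    by (rule LIMSEQ_imp_Suc)
  then show ?thesis
    by (intro lim_imp_Liminf tendsto_ereal) simp_all
qed

lemma conv2_asymp_equiv_if_S_lattice:
  assumes "S_lattice F \<gamma>"
  shows "\<exists>c>0. conv2 F \<sim>[sequentially] (\<lambda>n. c * pmf F n)"
proof
  obtain k where "0 < pmf F k"
    using assms infinite_set_pmf_obtains_pos by (auto simp: S_lattice_def)
  with assms have "0 < phi F \<gamma>"
    unfolding S_lattice_def phi_finite_iff phi_eq_suminf
    by (intro suminf_pos2[of _ k]) (auto intro: exp_tilt_nonneg)
  with assms show "0 < 2 * phi F \<gamma> \<and> conv2 F \<sim>[sequentially] (\<lambda>n. 2 * phi F \<gamma> * pmf F n)"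
    by (simp add: S_lattice_def)
qed

lemma not_conv2_asymp_equiv_if_liminf_infinite:
  fixes F :: "nat pmf"
  assumes unbounded: "infinite (set_pmf F)"
    and li: "liminf (\<lambda>x. ereal (pmf F (x - 1) / pmf F x)) = \<infinity>" and "0 < c"
  shows "\<not> conv2 F \<sim>[sequentially] (\<lambda>n. c * pmf F n)"
proof
  assume equiv: "conv2 F \<sim>[sequentially] (\<lambda>n. c * pmf F n)"
  have li_ge: "ereal L \<le> liminf (\<lambda>x. ereal (pmf F (x - 1) / pmf F x))" for L
    using li by simp
  interpret conv2_ratio_seq "pmf F" c
    using conv2_ratio_seq_exp_tilt[OF li_ge _ equiv, of 0] \<open>0 < c\<close> by simp
  obtain k where "1 \<le> k" "0 < pmf F k"
    using unbounded by (rule infinite_set_pmf_obtains_pos)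
  then obtain L where L: "frequently (\<lambda>n. pmf F (n - 1) < L * pmf F n) sequentially"
    by (rule frequently_pred_less)
  have "eventually (\<lambda>n. 0 < pmf F n \<and> max L 1 * pmf F n \<le> pmf F (n - 1)) sequentially"
    by (rule eventually_pred_ge_if_liminf[OF pmf_nonneg li_ge[of "max L 1 + 1"]]) auto
  then have "eventually (\<lambda>n. L * pmf F n \<le> pmf F (n - 1)) sequentially"
    by (rule eventually_mono) (meson max.cobounded1 mult_right_mono order_trans pmf_nonneg)
  with L show False
    by (simp add: frequently_def not_less)
qed

theorem theorem8:
  fixes F :: "nat pmf"
  assumes unbounded: "infinite (set_pmf F)"
  shows "(gamma_hat F \<noteq> \<infinity> \<and> S_lattice F (real_of_ereal (gamma_hat F))) \<longleftrightarrow>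
    ((if gamma_hat F = \<infinity>
      then liminf (\<lambda>x. ereal (pmf F (x - 1) / pmf F x)) = \<infinity>
      else liminf (\<lambda>x. ereal (pmf F (x - 1) / pmf F x)) \<ge> ereal (exp (real_of_ereal (gamma_hat F))))
     \<and> (\<exists>c::real. c > 0 \<and> conv2 F \<sim>[sequentially] (\<lambda>n. c * pmf F n)))"
proof (cases "gamma_hat F")
  case (real \<gamma>)
  then show ?thesis
    using S_lattice_if_liminf_and_conv2_asymp_equiv[OF unbounded real]
      liminf_pred_ratio_if_S_lattice conv2_asymp_equiv_if_S_lattice
    by auto
next
  case PInf
  then show ?thesis
    using not_conv2_asymp_equiv_if_liminf_infinite[OF unbounded] by auto
next
  case MInf
  then show ?thesis
    using gamma_hat_nonneg[of F] by simp
qed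

end
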